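(* Let $F$ be a cumulative distribution function on $[0,\infty)$ with a density and finite positive mean $\mu$. Let $B,S$ be independent with distribution $F$ and let the price $p\sim F$ be drawn independently. Then \[\mathbb{E}_{p\sim F}\big[\mathsf{W}(p,F)\big]\ \ge\ \tfrac34\,\mathsf{OPT\text{-}W}(F).\]
   Context: Symmetric bilateral trade: $B$ (buyer's value) and $S$ (seller's value) are i.i.d. with distribution $F$. Posting price $p$, trade occurs iff $B\ge p>S$ (immaterial for continuous $F$). Welfare of price $p$: $\mathsf{W}(p,F)=\mathbb{E}[S]+\mathbb{E}[(B-S)\mathbf 1_{B\ge p>S}]$. Optimal welfare: $\mathsf{OPT\text{-}W}(F)=\mathbb{E}[S]+\mathbb{E}[(B-S)\mathbf 1_{B>S}]=\mathbb{E}[\max\{B,S\}]$. *)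

theory Defs
  imports "HOL-Probability.Probability"
begin

definition welfare :: "real measure \<Rightarrow> real \<Rightarrow> real" where
  "welfare M p = (\<integral>s. s \<partial>M) +
     (\<integral>z. (if fst z \<ge> p \<and> p > snd z then fst z - snd z else 0) \<partial>(M \<Otimes>\<^sub>M M))"

definition opt_welfare :: "real measure \<Rightarrow> real" where
  "opt_welfare M = (\<integral>s. s \<partial>M) +
     (\<integral>z. (if fst z > snd z then fst z - snd z else 0) \<partial>(M \<Otimes>\<^sub>M M))"

end

theory Submission
  imports Defs
begin

text \<open>Write \<open>D\<close> for the optimal gains from trade \<open>E[(B - S)\<^sup>+]\<close>, so that the optimal welfare
  is \<open>\<mu> + D\<close>.  For three i.i.d. draws \<open>x < y < z\<close> from an atomless law, summing over all six
  ways of assigning them the roles of buyer, seller and price, the pairwise gains \<open>(b - s)\<^sup>+\<close> add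
  up to \<open>2 (z - x)\<close> and the gains realised at the price add up to \<open>z - x\<close>.  Hence a price drawn
  from \<open>F\<close> realises exactly \<open>D / 2\<close> in expectation.  As \<open>D \<le> \<mu>\<close> (the seller's value is
  nonnegative), \<open>\<mu> + D / 2 \<ge> 3/4 (\<mu> + D)\<close>.\<close>

definition sum_perm3 :: "('a \<Rightarrow> 'a \<Rightarrow> 'a \<Rightarrow> 'b::plus) \<Rightarrow> 'a \<Rightarrow> 'a \<Rightarrow> 'a \<Rightarrow> 'b" where
  "sum_perm3 g x y z = g x y z + g x z y + g y x z + g y z x + g z x y + g z y x"

lemma measurable_triple_swaps:
  assumes "(\<lambda>(x, y, z). g x y z) \<in> borel_measurable (M \<Otimes>\<^sub>M (M \<Otimes>\<^sub>M M))"
  shows "(\<lambda>(x, y, z). g x z y) \<in> borel_measurable (M \<Otimes>\<^sub>M (M \<Otimes>\<^sub>M M))"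
    and "(\<lambda>(x, y, z). g y x z) \<in> borel_measurable (M \<Otimes>\<^sub>M (M \<Otimes>\<^sub>M M))"
proof -
  have "(\<lambda>(x, y, z). (x, z, y)) \<in> M \<Otimes>\<^sub>M (M \<Otimes>\<^sub>M M) \<rightarrow>\<^sub>M M \<Otimes>\<^sub>M (M \<Otimes>\<^sub>M M)"
       "(\<lambda>(x, y, z). (y, x, z)) \<in> M \<Otimes>\<^sub>M (M \<Otimes>\<^sub>M M) \<rightarrow>\<^sub>M M \<Otimes>\<^sub>M (M \<Otimes>\<^sub>M M)"
    by measurable
  from this[THEN measurable_comp, OF assms]
  show "(\<lambda>(x, y, z). g x z y) \<in> borel_measurable (M \<Otimes>\<^sub>M (M \<Otimes>\<^sub>M M))"
    and "(\<lambda>(x, y, z). g y x z) \<in> borel_measurable (M \<Otimes>\<^sub>M (M \<Otimes>\<^sub>M M))"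
    by (simp_all add: comp_def case_prod_beta)
qed

context sigma_finite_measure
begin

lemma nn_integral3_eq_pair:
  assumes [measurable]: "(\<lambda>(x, y, z). g x y z) \<in> borel_measurable (M \<Otimes>\<^sub>M (M \<Otimes>\<^sub>M M))"
  shows "(\<integral>\<^sup>+x. \<integral>\<^sup>+y. \<integral>\<^sup>+z. g x y z \<partial>M \<partial>M \<partial>M)
       = (\<integral>\<^sup>+(x, y, z). g x y z \<partial>(M \<Otimes>\<^sub>M (M \<Otimes>\<^sub>M M)))"
proof -
  interpret P: pair_sigma_finite M M ..
  have "(\<integral>\<^sup>+x. \<integral>\<^sup>+y. \<integral>\<^sup>+z. g x y z \<partial>M \<partial>M \<partial>M) = (\<integral>\<^sup>+x. \<integral>\<^sup>+(y, z). g x y z \<partial>(M \<Otimes>\<^sub>M M) \<partial>M)"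
  proof (rule nn_integral_cong)
    fix x assume "x \<in> space M"
    then show "(\<integral>\<^sup>+y. \<integral>\<^sup>+z. g x y z \<partial>M \<partial>M) = (\<integral>\<^sup>+(y, z). g x y z \<partial>(M \<Otimes>\<^sub>M M))"
      using nn_integral_fst[of "\<lambda>(y, z). g x y z" M] by simp
  qed
  also have "\<dots> = (\<integral>\<^sup>+(x, y, z). g x y z \<partial>(M \<Otimes>\<^sub>M (M \<Otimes>\<^sub>M M)))"
    using sigma_finite_measure.nn_integral_fst[OF P.sigma_finite_measure_axioms, of "\<lambda>(x, y, z). g x y z" M] assms
    by (simp add: case_prod_unfold)
  finally show ?thesis .
qed

lemma nn_integral3_swap_inner:
  assumes [measurable]: "(\<lambda>(x, y, z). g x y z) \<in> borel_measurable (M \<Otimes>\<^sub>M (M \<Otimes>\<^sub>M M))"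
  shows "(\<integral>\<^sup>+x. \<integral>\<^sup>+y. \<integral>\<^sup>+z. g x z y \<partial>M \<partial>M \<partial>M) = (\<integral>\<^sup>+x. \<integral>\<^sup>+y. \<integral>\<^sup>+z. g x y z \<partial>M \<partial>M \<partial>M)"
proof -
  interpret pair_sigma_finite M M ..
  show ?thesis
    by (intro nn_integral_cong Fubini') measurable
qed

lemma nn_integral3_swap_outer:
  assumes g: "(\<lambda>(x, y, z). g x y z) \<in> borel_measurable (M \<Otimes>\<^sub>M (M \<Otimes>\<^sub>M M))"
  shows "(\<integral>\<^sup>+x. \<integral>\<^sup>+y. \<integral>\<^sup>+z. g y x z \<partial>M \<partial>M \<partial>M) = (\<integral>\<^sup>+x. \<integral>\<^sup>+y. \<integral>\<^sup>+z. g x y z \<partial>M \<partial>M \<partial>M)"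
proof -
  interpret pair_sigma_finite M M ..
  have "(\<lambda>w. (fst (fst w), snd (fst w), snd w)) \<in> (M \<Otimes>\<^sub>M M) \<Otimes>\<^sub>M M \<rightarrow>\<^sub>M M \<Otimes>\<^sub>M (M \<Otimes>\<^sub>M M)"
    by measurable
  from measurable_comp[OF this g]
  have [measurable]: "(\<lambda>w. g (fst (fst w)) (snd (fst w)) (snd w)) \<in> borel_measurable ((M \<Otimes>\<^sub>M M) \<Otimes>\<^sub>M M)"
    by (simp add: comp_def case_prod_unfold)
  show ?thesis
    by (rule Fubini') measurable
qed

lemma nn_integral3_sum_perm3:
  assumes g: "(\<lambda>(x, y, z). g x y z) \<in> borel_measurable (M \<Otimes>\<^sub>M (M \<Otimes>\<^sub>M M))"
  shows "(\<integral>\<^sup>+x. \<integral>\<^sup>+y. \<integral>\<^sup>+z. sum_perm3 g x y z \<partial>M \<partial>M \<partial>M) = 6 * (\<integral>\<^sup>+x. \<integral>\<^sup>+y. \<integral>\<^sup>+z. g x y z \<partial>M \<partial>M \<partial>M)"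
proof -
  let ?I = "\<lambda>h. \<integral>\<^sup>+x. \<integral>\<^sup>+y. \<integral>\<^sup>+z. h x y z \<partial>M \<partial>M \<partial>M"
  let ?T = "M \<Otimes>\<^sub>M (M \<Otimes>\<^sub>M M)"
  note swaps = measurable_triple_swaps
  have m1: "(\<lambda>(x, y, z). g x z y) \<in> borel_measurable ?T" and m2: "(\<lambda>(x, y, z). g y x z) \<in> borel_measurable ?T"
    using swaps[OF g] .
  have m3: "(\<lambda>(x, y, z). g y z x) \<in> borel_measurable ?T" using swaps(2)[OF m1] .
  have m4: "(\<lambda>(x, y, z). g z x y) \<in> borel_measurable ?T" using swaps(1)[OF m2] .
  have m5: "(\<lambda>(x, y, z). g z y x) \<in> borel_measurable ?T" using swaps(2)[OF m4] .
  have i1: "?I (\<lambda>x y z. g x z y) = ?I g" using nn_integral3_swap_inner[OF g] .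
  have i2: "?I (\<lambda>x y z. g y x z) = ?I g" using nn_integral3_swap_outer[OF g] .
  have i3: "?I (\<lambda>x y z. g y z x) = ?I g" using nn_integral3_swap_outer[OF m1] i1 by simp
  have i4: "?I (\<lambda>x y z. g z x y) = ?I g" using nn_integral3_swap_inner[OF m2] i2 by simp
  have i5: "?I (\<lambda>x y z. g z y x) = ?I g" using nn_integral3_swap_outer[OF m4] i4 by simp
  have "?I (sum_perm3 g) = (\<integral>\<^sup>+(x, y, z). sum_perm3 g x y z \<partial>?T)"
  proof (rule nn_integral3_eq_pair)
    show "(\<lambda>(x, y, z). sum_perm3 g x y z) \<in> borel_measurable ?T"
      using g m1 m2 m3 m4 m5 unfolding sum_perm3_def case_prod_unfold by (intro borel_measurable_add)
  qed
  also have "\<dots> = ?I g + ?I (\<lambda>x y z. g x z y) + ?I (\<lambda>x y z. g y x z) + ?I (\<lambda>x y z. g y z x)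
      + ?I (\<lambda>x y z. g z x y) + ?I (\<lambda>x y z. g z y x)"
    using g m1 m2 m3 m4 m5
    by (simp add: sum_perm3_def case_prod_unfold nn_integral_add nn_integral3_eq_pair)
  also have "\<dots> = 6 * ?I g"
    unfolding i1 i2 i3 i4 i5
    by (simp only: numeral_Bit0 numeral_Bit1 numeral_One distrib_right mult_1 add.assoc)
  finally show ?thesis .
qed

end

lemma (in sigma_finite_measure) integral_pair_eq_nn_integral:
  assumes [measurable]: "case_prod f \<in> borel_measurable (N \<Otimes>\<^sub>M M)" and nonneg: "\<And>x y. 0 \<le> f x y"
  shows "(\<integral>z. f (fst z) (snd z) \<partial>(N \<Otimes>\<^sub>M M)) = enn2real (\<integral>\<^sup>+x. \<integral>\<^sup>+y. f x y \<partial>M \<partial>N)"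
proof -
  have "(\<integral>z. f (fst z) (snd z) \<partial>(N \<Otimes>\<^sub>M M)) = enn2real (\<integral>\<^sup>+z. f (fst z) (snd z) \<partial>(N \<Otimes>\<^sub>M M))"
    using nonneg by (intro integral_eq_nn_integral) (auto simp: case_prod_unfold)
  also have "(\<integral>\<^sup>+z. f (fst z) (snd z) \<partial>(N \<Otimes>\<^sub>M M)) = (\<integral>\<^sup>+x. \<integral>\<^sup>+y. f x y \<partial>M \<partial>N)"
    using nn_integral_fst[of "\<lambda>(x, y). ennreal (f x y)" N] by (simp add: case_prod_unfold)
  finally show ?thesis .
qed

lemma AE_AE_AE_distinctI:
  assumes atomless: "\<And>x. AE y in M. y \<noteq> x"
    and P: "\<And>x y z. x \<noteq> y \<Longrightarrow> x \<noteq> z \<Longrightarrow> y \<noteq> z \<Longrightarrow> P x y z"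
  shows "AE x in M. AE y in M. AE z in M. P x y z"
proof (rule AE_I2)
  fix x
  show "AE y in M. AE z in M. P x y z"
    using atomless[of x]
  proof eventually_elim
    case (elim y)
    show ?case using atomless[of x] atomless[of y] by eventually_elim (use elim in \<open>auto intro: P\<close>)
  qed
qed

lemma nn_integral3_cong_AE:
  assumes "AE x in M. AE y in M. AE z in M. g x y z = h x y z"
  shows "(\<integral>\<^sup>+x. \<integral>\<^sup>+y. \<integral>\<^sup>+z. g x y z \<partial>M \<partial>M \<partial>M) = (\<integral>\<^sup>+x. \<integral>\<^sup>+y. \<integral>\<^sup>+z. h x y z \<partial>M \<partial>M \<partial>M)"
  using assms by (auto intro!: nn_integral_cong_AE elim!: eventually_mono)

definition gft_at :: "real \<Rightarrow> real \<Rightarrow> real \<Rightarrow> real" where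
  "gft_at b s p = (if b \<ge> p \<and> p > s then b - s else 0)"

definition gft :: "real \<Rightarrow> real \<Rightarrow> real" where
  "gft b s = (if b > s then b - s else 0)"

lemma gft_at_nonneg: "0 \<le> gft_at b s p"
  by (simp add: gft_at_def)

lemma gft_nonneg: "0 \<le> gft b s"
  by (simp add: gft_def)

lemma gft_at_le_gft: "gft_at b s p \<le> gft b s"
  by (simp add: gft_at_def gft_def)

lemma measurable_gft_at[measurable]:
  assumes [measurable]: "b \<in> borel_measurable N" "s \<in> borel_measurable N" "p \<in> borel_measurable N"
  shows "(\<lambda>x. gft_at (b x) (s x) (p x)) \<in> borel_measurable N"
  unfolding gft_at_def by measurable

lemma measurable_gft[measurable]:
  assumes [measurable]: "b \<in> borel_measurable N" "s \<in> borel_measurable N"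
  shows "(\<lambda>x. gft (b x) (s x)) \<in> borel_measurable N"
  unfolding gft_def by measurable

lemma sum_perm3_gft_eq:
  assumes "a \<noteq> b" "a \<noteq> c" "b \<noteq> c"
  shows "sum_perm3 (\<lambda>x y z. ennreal (gft y z)) a b c = sum_perm3 (\<lambda>x y z. ennreal (2 * gft_at y z x)) a b c"
proof -
  have "gft b c + gft c b + gft a c + gft c a + gft a b + gft b a
      = 2 * gft_at b c a + 2 * gft_at c b a + 2 * gft_at a c b + 2 * gft_at c a b + 2 * gft_at a b c + 2 * gft_at b a c"
    using assms unfolding gft_def gft_at_def by (cases "a < b"; cases "b < c"; cases "a < c") auto
  then show ?thesis
    unfolding sum_perm3_def by (simp add: gft_nonneg gft_at_nonneg ennreal_plus[symmetric] del: ennreal_plus)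
qed

lemma nn_integral_gft_random_price:
  fixes M :: "real measure"
  assumes "prob_space M" and sets: "sets M = sets borel" and atomless: "\<And>x. AE y in M. y \<noteq> x"
  shows "2 * (\<integral>\<^sup>+p. \<integral>\<^sup>+b. \<integral>\<^sup>+s. gft_at b s p \<partial>M \<partial>M \<partial>M) = (\<integral>\<^sup>+b. \<integral>\<^sup>+s. gft b s \<partial>M \<partial>M)"
proof -
  interpret prob_space M by fact
  note [measurable_cong] = sets
  let ?I = "\<lambda>h. \<integral>\<^sup>+x. \<integral>\<^sup>+y. \<integral>\<^sup>+z. h x y z \<partial>M \<partial>M \<partial>M"
  have "6 * (\<integral>\<^sup>+b. \<integral>\<^sup>+s. gft b s \<partial>M \<partial>M) = 6 * ?I (\<lambda>x y z. ennreal (gft y z))"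
    by (simp add: emeasure_space_1)
  also have "\<dots> = ?I (sum_perm3 (\<lambda>x y z. ennreal (gft y z)))"
    by (rule nn_integral3_sum_perm3[symmetric]) measurable
  also have "\<dots> = ?I (sum_perm3 (\<lambda>x y z. ennreal (2 * gft_at y z x)))"
    by (intro nn_integral3_cong_AE AE_AE_AE_distinctI atomless sum_perm3_gft_eq)
  also have "\<dots> = 6 * ?I (\<lambda>x y z. ennreal (2 * gft_at y z x))"
    by (rule nn_integral3_sum_perm3) measurable
  also have "?I (\<lambda>x y z. ennreal (2 * gft_at y z x)) = (\<integral>\<^sup>+(x, y, z). 2 * ennreal (gft_at y z x) \<partial>(M \<Otimes>\<^sub>M (M \<Otimes>\<^sub>M M)))"
    by (subst nn_integral3_eq_pair) (simp_all add: ennreal_mult gft_at_nonneg case_prod_unfold)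
  also have "\<dots> = 2 * (\<integral>\<^sup>+(x, y, z). gft_at y z x \<partial>(M \<Otimes>\<^sub>M (M \<Otimes>\<^sub>M M)))"
    by (subst nn_integral_cmult[symmetric]) (simp_all add: case_prod_unfold)
  also have "\<dots> = 2 * (\<integral>\<^sup>+p. \<integral>\<^sup>+b. \<integral>\<^sup>+s. gft_at b s p \<partial>M \<partial>M \<partial>M)"
    by (subst nn_integral3_eq_pair) (simp_all add: case_prod_unfold)
  finally have "6 * (\<integral>\<^sup>+b. \<integral>\<^sup>+s. gft b s \<partial>M \<partial>M) = 6 * (2 * (\<integral>\<^sup>+p. \<integral>\<^sup>+b. \<integral>\<^sup>+s. gft_at b s p \<partial>M \<partial>M \<partial>M))" .
  then show ?thesis
    unfolding ennreal_mult_cancel_left by simp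
qed

lemma nn_integral_gft_le_mean:
  fixes M :: "real measure"
  assumes "prob_space M" and nonneg: "AE x in M. 0 \<le> x" and mean: "integrable M (\<lambda>x. x)"
  shows "(\<integral>\<^sup>+b. \<integral>\<^sup>+s. gft b s \<partial>M \<partial>M) \<le> ennreal (\<integral>x. x \<partial>M)"
proof -
  interpret prob_space M by fact
  have "(\<integral>\<^sup>+b. \<integral>\<^sup>+s. gft b s \<partial>M \<partial>M) \<le> (\<integral>\<^sup>+b. \<integral>\<^sup>+s. b \<partial>M \<partial>M)"
  proof (rule nn_integral_mono_AE)
    show "AE b in M. (\<integral>\<^sup>+s. gft b s \<partial>M) \<le> (\<integral>\<^sup>+s. b \<partial>M)"
      using nonneg
    proof eventually_elim
      case (elim b)
      show ?case
        using nonneg by (intro nn_integral_mono_AE) (use elim in \<open>auto elim!: eventually_mono intro!: ennreal_leI simp: gft_def\<close>)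
    qed
  qed
  also have "\<dots> = ennreal (\<integral>x. x \<partial>M)"
    by (simp add: emeasure_space_1 nn_integral_eq_integral[OF mean nonneg])
  finally show ?thesis .
qed

lemma welfare_eq_gft_at:
  fixes M :: "real measure"
  assumes "sigma_finite_measure M" and sets: "sets M = sets borel"
  shows "welfare M p = (\<integral>s. s \<partial>M) + enn2real (\<integral>\<^sup>+b. \<integral>\<^sup>+s. gft_at b s p \<partial>M \<partial>M)"
proof -
  interpret sigma_finite_measure M by fact
  note [measurable_cong] = sets
  have "welfare M p = (\<integral>s. s \<partial>M) + (\<integral>z. gft_at (fst z) (snd z) p \<partial>(M \<Otimes>\<^sub>M M))"
    by (simp add: welfare_def gft_at_def)
  also have "(\<integral>z. gft_at (fst z) (snd z) p \<partial>(M \<Otimes>\<^sub>M M)) = enn2real (\<integral>\<^sup>+b. \<integral>\<^sup>+s. gft_at b s p \<partial>M \<partial>M)"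
    by (rule integral_pair_eq_nn_integral) (simp_all add: gft_at_nonneg)
  finally show ?thesis .
qed

lemma opt_welfare_eq_gft:
  fixes M :: "real measure"
  assumes "sigma_finite_measure M" and sets: "sets M = sets borel"
  shows "opt_welfare M = (\<integral>s. s \<partial>M) + enn2real (\<integral>\<^sup>+b. \<integral>\<^sup>+s. gft b s \<partial>M \<partial>M)"
proof -
  interpret sigma_finite_measure M by fact
  note [measurable_cong] = sets
  have "opt_welfare M = (\<integral>s. s \<partial>M) + (\<integral>z. gft (fst z) (snd z) \<partial>(M \<Otimes>\<^sub>M M))"
    by (simp add: opt_welfare_def gft_def)
  also have "(\<integral>z. gft (fst z) (snd z) \<partial>(M \<Otimes>\<^sub>M M)) = enn2real (\<integral>\<^sup>+b. \<integral>\<^sup>+s. gft b s \<partial>M \<partial>M)"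
    by (rule integral_pair_eq_nn_integral) (simp_all add: gft_nonneg)
  finally show ?thesis .
qed

lemma integral_welfare_eq:
  fixes M :: "real measure"
  assumes "prob_space M" and sets: "sets M = sets borel"
    and fin: "(\<integral>\<^sup>+b. \<integral>\<^sup>+s. gft b s \<partial>M \<partial>M) < \<top>"
  shows "(\<integral>p. welfare M p \<partial>M) = (\<integral>s. s \<partial>M) + enn2real (\<integral>\<^sup>+p. \<integral>\<^sup>+b. \<integral>\<^sup>+s. gft_at b s p \<partial>M \<partial>M \<partial>M)"
proof -
  interpret prob_space M by fact
  note [measurable_cong] = sets
  define D where "D = (\<integral>\<^sup>+b. \<integral>\<^sup>+s. gft b s \<partial>M \<partial>M)"
  define H where "H p = (\<integral>\<^sup>+b. \<integral>\<^sup>+s. gft_at b s p \<partial>M \<partial>M)" for p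
  have H_le_D: "H p \<le> D" for p
    unfolding H_def D_def by (intro nn_integral_mono ennreal_leI gft_at_le_gft)
  have D_fin: "D < \<top>" using fin by (simp add: D_def)
  have [measurable]: "H \<in> borel_measurable M" unfolding H_def by measurable
  have "integrable M (\<lambda>p. enn2real (H p))"
    using H_le_D D_fin by (intro integrable_const_bound[where B = "enn2real D"]) (auto intro: enn2real_mono)
  moreover have "(\<integral>p. enn2real (H p) \<partial>M) = enn2real (\<integral>\<^sup>+p. H p \<partial>M)"
    using le_less_trans[OF H_le_D D_fin]
    by (intro enn2real_nn_integral_eq_integral[symmetric]) (simp_all add: ennreal_enn2real)
  ultimately show ?thesis
    using welfare_eq_gft_at[OF sigma_finite_measure_axioms sets] by (simp add: H_def prob_space)
qed

theorem theorem2: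
  fixes M :: "real measure" and f :: "real \<Rightarrow> ennreal"
  assumes f_meas: "f \<in> borel_measurable borel"
    and M_def: "M = density lborel f"
    and prob: "prob_space M"
    and nonneg: "AE x in M. x \<ge> 0"
    and mean_fin: "integrable M (\<lambda>x. x)"
    and mean_pos: "(\<integral>x. x \<partial>M) > 0"
  shows "(\<integral>p. welfare M p \<partial>M) \<ge> 3 / 4 * opt_welfare M"
proof -
  interpret prob_space M by (rule prob)
  have sets: "sets M = sets borel" using M_def by simp
  have atomless: "AE y in M. y \<noteq> x" for x
    unfolding M_def using AE_lborel_singleton[of x] f_meas by (auto simp: AE_density elim!: eventually_mono)
  define mu where "mu = (\<integral>x. x \<partial>M)"
  define D where "D = (\<integral>\<^sup>+b. \<integral>\<^sup>+s. gft b s \<partial>M \<partial>M)"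
  define A where "A = (\<integral>\<^sup>+p. \<integral>\<^sup>+b. \<integral>\<^sup>+s. gft_at b s p \<partial>M \<partial>M \<partial>M)"
  have D_le_mu: "D \<le> ennreal mu"
    unfolding D_def mu_def using prob nonneg mean_fin by (rule nn_integral_gft_le_mean)
  have A_half: "2 * A = D"
    unfolding D_def A_def using prob sets atomless by (rule nn_integral_gft_random_price)
  have "(\<integral>p. welfare M p \<partial>M) = mu + enn2real D / 2"
    using integral_welfare_eq[OF prob sets] D_le_mu
    by (simp flip: A_half D_def add: A_def mu_def enn2real_mult le_less_trans)
  moreover have "opt_welfare M = mu + enn2real D"
    using opt_welfare_eq_gft[OF sigma_finite_measure_axioms sets] by (simp add: mu_def D_def)
  moreover have "enn2real D \<le> mu"
    using enn2real_mono[OF D_le_mu] mean_pos by (simp add: mu_def)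
  ultimately show ?thesis by simp
qed

end
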